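(* Suppose $\nabla f$ is Lipschitz continuous on $\mathbb{R}^n$ with modulus $L$, $f$ is twice continuously differentiable, and let $x^*\in\mathbb{R}^n$ and $\Lambda_*\in\mathbb S^n_{++}$ with $\lambda_MI\succeq\Lambda_*\succeq\lambda_mI$, $\lambda_m>0$, be such that every $M\in\mathcal M^{\Lambda_*}(x^* )$ is nonsingular with $\|M^{-1}\|\le C$ for some $C>0$. Then for all $\beta_c\in(0,1)$ and $\gamma_c\in(0,\beta_c/C)$ there exists $\varepsilon_c>0$, independent of the sample batches, such that for any sample batches $s,t$ and any $x$ satisfying $$x\in B_{\varepsilon_c}(x^* ),\qquad\|\nabla f(x)-G_s(x)\|\le\varepsilon_c,\qquad\|\nabla^2f(x)-H_t(x)\|\le0.5\lambda_m\gamma_c,$$ every $M\in\mathcal M^{\Lambda_*}_{s,t}(x)$ is invertible with $\|M^{-1}\|\le C/(1-\beta_c)$.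
   Context: $r:\mathbb{R}^n\to(-\infty,+\infty]$ convex, lsc, proper; $\mathrm{prox}^\Lambda_r(x):=\arg\min_y r(y)+\frac12\langle x-y,\Lambda(x-y)\rangle$; $\partial$ denotes the Clarke generalized Jacobian. $u^\Lambda(x):=x-\Lambda^{-1}\nabla f(x)$, $\mathcal M^\Lambda(x):=\{(I-D)+D\Lambda^{-1}\nabla^2f(x):D\in\partial\mathrm{prox}^\Lambda_r(u^\Lambda(x))\}$. Sample batches $s,t$ yield a stochastic gradient $G_s(x)\in\mathbb{R}^n$ and a stochastic Hessian $H_t(x)\in\mathbb S^n$; $u^\Lambda_s(x):=x-\Lambda^{-1}G_s(x)$ and $\mathcal M^\Lambda_{s,t}(x):=\{(I-D)+D\Lambda^{-1}H_t(x):D\in\partial\mathrm{prox}^\Lambda_r(u^\Lambda_s(x))\}$. Matrix norms are spectral norms; $B_\varepsilon(x^* )$ is the open Euclidean ball. *)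

theory Defs
  imports "HOL-Analysis.Analysis"
begin

definition ext_convex :: "('a::real_vector \<Rightarrow> ereal) \<Rightarrow> bool" where
  "ext_convex r \<longleftrightarrow> (\<forall>x y t. 0 \<le> t \<and> t \<le> 1 \<longrightarrow>
      r ((1 - t) *\<^sub>R x + t *\<^sub>R y) \<le> ereal (1 - t) * r x + ereal t * r y)"

definition lsc :: "('a::topological_space \<Rightarrow> ereal) \<Rightarrow> bool" where
  "lsc r \<longleftrightarrow> (\<forall>x. r x \<le> Liminf (at x) r)"

definition proper_fun :: "('a \<Rightarrow> ereal) \<Rightarrow> bool" where
  "proper_fun r \<longleftrightarrow> (\<forall>x. r x \<noteq> -\<infinity>) \<and> (\<exists>x. r x \<noteq> \<infinity>)"

definition sym_mat :: "real^'n^'n \<Rightarrow> bool" where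
  "sym_mat A \<longleftrightarrow> transpose A = A"

definition loewner_le :: "real^'n^'n \<Rightarrow> real^'n^'n \<Rightarrow> bool" where
  "loewner_le A B \<longleftrightarrow> (\<forall>v. v \<bullet> ((B - A) *v v) \<ge> 0)"

definition pos_def :: "real^'n^'n \<Rightarrow> bool" where
  "pos_def A \<longleftrightarrow> sym_mat A \<and> (\<forall>v. v \<noteq> 0 \<longrightarrow> v \<bullet> (A *v v) > 0)"

definition mnorm :: "real^'n^'n \<Rightarrow> real" where
  "mnorm A = onorm (\<lambda>v. A *v v)"

definition prox :: "real^'n^'n \<Rightarrow> (real^'n \<Rightarrow> ereal) \<Rightarrow> real^'n \<Rightarrow> real^'n" where
  "prox \<Lambda> r x = (THE y. \<forall>z.
      r y + ereal ((1/2) * ((x - y) \<bullet> (\<Lambda> *v (x - y))))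
        \<le> r z + ereal ((1/2) * ((x - z) \<bullet> (\<Lambda> *v (x - z)))))"

definition bouligand_jac :: "(real^'n \<Rightarrow> real^'n) \<Rightarrow> real^'n \<Rightarrow> (real^'n^'n) set" where
  "bouligand_jac F u = {M. \<exists>xs :: nat \<Rightarrow> real^'n.
      xs \<longlonglongrightarrow> u \<and> (\<forall>k. F differentiable (at (xs k))) \<and>
      (\<lambda>k. jacobian F (at (xs k))) \<longlonglongrightarrow> M}"

definition clarke_jac :: "(real^'n \<Rightarrow> real^'n) \<Rightarrow> real^'n \<Rightarrow> (real^'n^'n) set" where
  "clarke_jac F u = convex hull (bouligand_jac F u)"

text \<open>u^\<Lambda>(x) with a given (exact or stochastic) gradient value g, and the set
  {(I - D) + D \<Lambda>^{-1} H : D \<in> \<partial>prox^\<Lambda>_r(x - \<Lambda>^{-1} g)}.\<close>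

definition Mset :: "real^'n^'n \<Rightarrow> (real^'n \<Rightarrow> ereal) \<Rightarrow> real^'n \<Rightarrow> real^'n \<Rightarrow> real^'n^'n
     \<Rightarrow> (real^'n^'n) set" where
  "Mset \<Lambda> r x g H = {(mat 1 - D) + D ** matrix_inv \<Lambda> ** H | D.
      D \<in> clarke_jac (prox \<Lambda> r) (x - matrix_inv \<Lambda> *v g)}"

end

theory Submission
  imports Defs
begin

text \<open>The scaled proximal map is firmly nonexpansive in the Lambda-norm, so each of its Jacobians D
  satisfies (Dh, Lambda Dh) <= (Dh, Lambda h). Such matrices form a compact convex set, which makes the
  Clarke Jacobian of prox upper semicontinuous and gives lamm |D Lambda^-1 w| <= |w|. Near x*, the
  stochastic prox argument u_s(x) is close to u(x*), so every D in the Clarke Jacobian at u_s(x) is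
  close to some D' in the closure of the Clarke Jacobian at u(x*), where the regularity bound
  |v| <= C |M' v| persists by closedness. The Newton matrices M built from D and H_t(x) and M' built
  from D' and the Hessian at x* then differ by at most beta/C in norm, whence
  |v| <= C/(1 - beta) |M v|.\<close>

section \<open>Matrices and quadratic forms\<close>

lemma sym_mat_inner_commute:
  fixes A :: "real^'n^'n"
  assumes "sym_mat A"
  shows "x \<bullet> (A *v y) = y \<bullet> (A *v x)"
  using assms unfolding sym_mat_def
  by (metis dot_lmul_matrix inner_commute vector_transpose_matrix)

lemma quadratic_form_diff_scaleR:
  fixes A :: "real^'n^'n"
  assumes "sym_mat A"
  shows "(x - t *\<^sub>R y) \<bullet> (A *v (x - t *\<^sub>R y)) =
     x \<bullet> (A *v x) - 2 * t * (y \<bullet> (A *v x)) + t\<^sup>2 * (y \<bullet> (A *v y))"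
  using sym_mat_inner_commute[OF assms, of x y]
  by (simp add: matrix_vector_mult_diff_distrib matrix_vector_mult_scaleR inner_diff_left
      inner_diff_right power2_eq_square algebra_simps)

lemma quadratic_form_convex_combination:
  fixes L :: "real^'n^'n"
  assumes sym: "sym_mat L" and ab: "a + b = (1::real)"
  shows "(a *\<^sub>R y1 + b *\<^sub>R y2) \<bullet> (L *v (a *\<^sub>R y1 + b *\<^sub>R y2)) =
    a * (y1 \<bullet> (L *v y1)) + b * (y2 \<bullet> (L *v y2)) - a * b * ((y1 - y2) \<bullet> (L *v (y1 - y2)))"
proof -
  have b: "b = 1 - a" using ab by simp
  show ?thesis unfolding b using sym_mat_inner_commute[OF sym, of y2 y1]
    by (simp add: matrix_vector_right_distrib matrix_vector_mult_diff_distrib matrix_vector_mult_scaleR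
        inner_add_left inner_add_right inner_diff_left inner_diff_right algebra_simps)
qed

lemma loewner_le_scaleR_mat_1D:
  fixes L :: "real^'n^'n"
  assumes "loewner_le (c *\<^sub>R mat 1) L"
  shows "c * (v \<bullet> v) \<le> v \<bullet> (L *v v)"
proof -
  have "0 \<le> v \<bullet> ((L - c *\<^sub>R mat 1) *v v)" using assms unfolding loewner_le_def by blast
  also have "(L - c *\<^sub>R mat 1) *v v = L *v v - c *\<^sub>R v"
    by (simp add: matrix_vector_mult_diff_rdistrib scaleR_matrix_vector_assoc[symmetric])
  finally show ?thesis by (simp add: inner_diff_right)
qed

lemma quadratic_form_nonneg:
  fixes L :: "real^'n^'n"
  assumes "\<And>v. lamm * (v \<bullet> v) \<le> v \<bullet> (L *v v)" and "0 < lamm"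
  shows "0 \<le> v \<bullet> (L *v v)"
  using assms(1)[of v] assms(2) by (meson inner_ge_zero mult_nonneg_nonneg less_imp_le order_trans)

lemma norm_matrix_vector_mult_le:
  fixes A :: "real^'n^'m"
  shows "norm (A *v x) \<le> norm A * norm x"
proof -
  have "\<bar>(A *v x) $ i\<bar> \<le> norm (A $ i) * norm x" for i
  proof -
    have "(A *v x) $ i = A $ i \<bullet> x"
      by (simp add: matrix_vector_mult_def inner_vec_def mult.commute)
    then show ?thesis by (simp add: Cauchy_Schwarz_ineq2)
  qed
  then have "norm (A *v x) \<le> L2_set (\<lambda>i. norm (A $ i) * norm x) UNIV"
    unfolding norm_vec_def by (intro L2_set_mono) auto
  also have "\<dots> = norm A * norm x"
    using L2_set_right_distrib[of "norm x" "\<lambda>i. norm (A $ i)" UNIV]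
    by (simp add: norm_vec_def[of A] mult.commute)
  finally show ?thesis .
qed

lemma bounded_bilinear_matrix_vector_mult:
  "bounded_bilinear (\<lambda>(A::real^'n^'m) x. A *v x)"
proof
  show "\<exists>K. \<forall>(A::real^'n^'m) x. norm (A *v x) \<le> norm A * norm x * K"
    by (auto intro!: exI[of _ 1] simp: norm_matrix_vector_mult_le)
qed (auto simp: matrix_vector_mult_add_rdistrib matrix_vector_right_distrib
       scaleR_matrix_vector_assoc matrix_vector_mult_scaleR)

lemma continuous_on_matrix_vector_mult_left: "continuous_on S (\<lambda>A::real^'n^'m. A *v x)"
  by (intro bounded_bilinear.continuous_on[OF bounded_bilinear_matrix_vector_mult] continuous_intros)

lemma norm_matrix_vector_mult_le_mnorm: "norm (A *v x) \<le> mnorm A * norm x"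
  unfolding mnorm_def by (rule onorm[OF matrix_vector_mul_bounded_linear])

lemma mnorm_le_norm: "mnorm A \<le> norm A"
  unfolding mnorm_def by (rule onorm_le) (simp add: norm_matrix_vector_mult_le)

lemma mnorm_triangle: "mnorm (A + B) \<le> mnorm A + mnorm (B::real^'n^'n)"
  unfolding mnorm_def matrix_vector_mult_add_rdistrib
  by (rule onorm_triangle) (rule matrix_vector_mul_bounded_linear)+

lemma invertible_matrix_inv:
  fixes A :: "real^'n^'n"
  assumes "invertible A"
  shows "A ** matrix_inv A = mat 1" "matrix_inv A ** A = mat 1"
proof -
  have "\<exists>A'. A ** A' = mat 1 \<and> A' ** A = mat 1" using assms unfolding invertible_def .
  then have "A ** matrix_inv A = mat 1 \<and> matrix_inv A ** A = mat 1"
    unfolding matrix_inv_def by (rule someI_ex)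
  then show "A ** matrix_inv A = mat 1" "matrix_inv A ** A = mat 1" by auto
qed

lemma coercive_imp_invertible:
  fixes L :: "real^'n^'n"
  assumes low: "\<And>v. lamm * (v \<bullet> v) \<le> v \<bullet> (L *v v)" and lm: "0 < lamm"
  shows "invertible L"
proof -
  have "x = 0" if "L *v x = 0" for x
  proof -
    have "lamm * (x \<bullet> x) \<le> 0" using low[of x] that by simp
    then have "x \<bullet> x \<le> 0" using lm by (simp add: mult_le_0_iff)
    then show ?thesis by (meson inner_gt_zero_iff not_le)
  qed
  then show ?thesis unfolding invertible_left_inverse matrix_left_invertible_ker by blast
qed

lemma invertible_if_lower_bound:
  fixes M :: "real^'n^'n"
  assumes c: "0 < c" and low: "\<And>v. c * norm v \<le> norm (M *v v)"
  shows "invertible M" "mnorm (matrix_inv M) \<le> 1 / c"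
proof -
  have "x = 0" if "M *v x = 0" for x
    using low[of x] c that by (simp add: mult_le_0_iff)
  then show inv: "invertible M" unfolding invertible_left_inverse matrix_left_invertible_ker by blast
  show "mnorm (matrix_inv M) \<le> 1 / c" unfolding mnorm_def
  proof (rule onorm_le)
    fix w
    have "M *v (matrix_inv M *v w) = w" by (simp add: matrix_vector_mul_assoc invertible_matrix_inv[OF inv])
    then have "c * norm (matrix_inv M *v w) \<le> norm w" using low[of "matrix_inv M *v w"] by simp
    then show "norm (matrix_inv M *v w) \<le> 1 / c * norm w" using c by (simp add: field_simps)
  qed
qed

lemma lower_bound_if_mnorm_inv_le:
  fixes M :: "real^'n^'n"
  assumes "invertible M" "mnorm (matrix_inv M) \<le> C"
  shows "norm v \<le> C * norm (M *v v)"
proof -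
  have "norm v = norm (matrix_inv M *v (M *v v))"
    by (simp add: matrix_vector_mul_assoc invertible_matrix_inv[OF assms(1)])
  also have "\<dots> \<le> mnorm (matrix_inv M) * norm (M *v v)" by (rule norm_matrix_vector_mult_le_mnorm)
  also have "\<dots> \<le> C * norm (M *v v)" using assms(2) by (intro mult_right_mono) auto
  finally show ?thesis .
qed

lemma lower_bound_perturbation:
  fixes M M' :: "real^'n^'n"
  assumes M': "\<And>v. norm v \<le> C * norm (M' *v v)" and close: "\<And>v. norm ((M - M') *v v) \<le> \<beta> / C * norm v"
    and C: "0 < C"
  shows "(1 - \<beta>) / C * norm v \<le> norm (M *v v)"
proof -
  have "norm (M' *v v) \<le> norm (M *v v) + norm ((M - M') *v v)"
    using norm_triangle_ineq4[of "M *v v" "(M - M') *v v"] by (simp add: matrix_vector_mult_diff_rdistrib)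
  also have "\<dots> \<le> norm (M *v v) + \<beta> / C * norm v" using close[of v] by simp
  finally have "C * norm (M' *v v) \<le> C * (norm (M *v v) + \<beta> / C * norm v)"
    using C by (intro mult_left_mono) auto
  then have "norm v \<le> C * norm (M *v v) + C * (\<beta> / C * norm v)"
    using M'[of v] by (simp add: distrib_left)
  then have "(1 - \<beta>) * norm v \<le> C * norm (M *v v)" using C by (simp add: algebra_simps)
  then show ?thesis using C by (simp add: field_simps)
qed

section \<open>Scaled proximal points\<close>

definition prox_quad :: "real^'n^'n \<Rightarrow> real^'n \<Rightarrow> real^'n \<Rightarrow> real" where
  "prox_quad L u y = (1/2) * ((u - y) \<bullet> (L *v (u - y)))"

definition is_prox_point :: "real^'n^'n \<Rightarrow> (real^'n \<Rightarrow> ereal) \<Rightarrow> real^'n \<Rightarrow> real^'n \<Rightarrow> bool" where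
  "is_prox_point L r u p \<longleftrightarrow> (\<forall>z. r p + ereal (prox_quad L u p) \<le> r z + ereal (prox_quad L u z))"

lemma prox_eq_The_is_prox_point: "prox L r u = (THE p. is_prox_point L r u p)"
  unfolding prox_def is_prox_point_def prox_quad_def ..

lemma continuous_on_prox_quad: "continuous_on UNIV (prox_quad L u)"
  unfolding prox_quad_def
  by (intro continuous_intros continuous_on_compose2[OF matrix_vector_mult_linear_continuous_on]) auto

lemma is_prox_point_finite:
  assumes "proper_fun r" "is_prox_point L r u p"
  shows "\<exists>a. r p = ereal a"
proof -
  obtain y0 where y0: "r y0 \<noteq> \<infinity>" using assms(1) unfolding proper_fun_def by auto
  have "r p + ereal (prox_quad L u p) \<le> r y0 + ereal (prox_quad L u y0)"
    using assms(2) unfolding is_prox_point_def by auto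
  then have "r p \<noteq> \<infinity>" using y0 by auto
  moreover have "r p \<noteq> -\<infinity>" using assms(1) unfolding proper_fun_def by auto
  ultimately show ?thesis by (cases "r p") auto
qed

lemma is_prox_point_segment_ineq:
  assumes conv: "ext_convex r" and sym: "sym_mat L"
    and p: "is_prox_point L r u p" and rp: "r p = ereal a" and rz: "r z = ereal b"
    and t: "0 < t" "t \<le> 1"
  shows "a \<le> b - (z - p) \<bullet> (L *v (u - p)) + t * ((z - p) \<bullet> (L *v (z - p))) / 2"
proof -
  define y where "y = (1 - t) *\<^sub>R p + t *\<^sub>R z"
  define w where "w = (z - p) \<bullet> (L *v (u - p))"
  define c where "c = (z - p) \<bullet> (L *v (z - p))"
  have "r y \<le> ereal (1 - t) * r p + ereal t * r z"
    using conv t unfolding ext_convex_def y_def by auto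
  then have "r y \<le> ereal ((1 - t) * a + t * b)" using rp rz by simp
  moreover have "r p + ereal (prox_quad L u p) \<le> r y + ereal (prox_quad L u y)"
    using p unfolding is_prox_point_def by auto
  ultimately have "r p + ereal (prox_quad L u p) \<le> ereal ((1 - t) * a + t * b) + ereal (prox_quad L u y)"
    by (meson add_right_mono order_trans)
  then have ineq: "a + prox_quad L u p \<le> (1 - t) * a + t * b + prox_quad L u y" using rp by simp
  have uy: "u - y = (u - p) - t *\<^sub>R (z - p)" unfolding y_def by (simp add: algebra_simps)
  have "prox_quad L u y = prox_quad L u p - t * w + t\<^sup>2 * c / 2"
    unfolding prox_quad_def uy quadratic_form_diff_scaleR[OF sym] w_def c_def by simp
  with ineq have "t * a \<le> t * (b - w + t * c / 2)" by (simp add: algebra_simps power2_eq_square)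
  then show ?thesis using t unfolding w_def c_def by simp
qed

lemma is_prox_point_variational_ineq:
  assumes conv: "ext_convex r" and prp: "proper_fun r" and sym: "sym_mat L"
    and p: "is_prox_point L r u p" and rp: "r p = ereal a"
  shows "ereal (a + (z - p) \<bullet> (L *v (u - p))) \<le> r z"
proof (cases "r z")
  case (real b)
  let ?w = "(z - p) \<bullet> (L *v (u - p))" and ?c = "(z - p) \<bullet> (L *v (z - p))"
  have lim: "((\<lambda>t. b - ?w + t * ?c / 2) \<longlongrightarrow> b - ?w + 0 * ?c / 2) (at_right 0)"
    by (intro tendsto_intros) simp
  have "\<forall>\<^sub>F t in at_right 0. a \<le> b - ?w + t * ?c / 2"
    unfolding eventually_at_right_field
    using is_prox_point_segment_ineq[OF conv sym p rp real] by (intro exI[of _ 1]) auto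
  then have "a \<le> b - ?w + 0 * ?c / 2"
    by (intro tendsto_lowerbound[OF lim]) simp_all
  then show ?thesis using real by simp
qed (use prp in \<open>auto simp: proper_fun_def\<close>)

lemma is_prox_point_firmly_nonexpansive:
  assumes conv: "ext_convex r" and prp: "proper_fun r" and sym: "sym_mat L"
    and p1: "is_prox_point L r u1 p1" and p2: "is_prox_point L r u2 p2"
  shows "(p1 - p2) \<bullet> (L *v (p1 - p2)) \<le> (p1 - p2) \<bullet> (L *v (u1 - u2))"
proof -
  obtain a1 where a1: "r p1 = ereal a1" using is_prox_point_finite[OF prp p1] by auto
  obtain a2 where a2: "r p2 = ereal a2" using is_prox_point_finite[OF prp p2] by auto
  have "a1 + (p2 - p1) \<bullet> (L *v (u1 - p1)) \<le> a2"
    using is_prox_point_variational_ineq[OF conv prp sym p1 a1, of p2] a2 by simp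
  moreover have "a2 + (p1 - p2) \<bullet> (L *v (u2 - p2)) \<le> a1"
    using is_prox_point_variational_ineq[OF conv prp sym p2 a2, of p1] a1 by simp
  moreover have "(p2 - p1) \<bullet> (L *v (u1 - p1)) + (p1 - p2) \<bullet> (L *v (u2 - p2))
     = (p1 - p2) \<bullet> (L *v (p1 - p2)) - (p1 - p2) \<bullet> (L *v (u1 - u2))"
    by (simp add: matrix_vector_mult_diff_distrib inner_diff_left inner_diff_right algebra_simps)
  ultimately show ?thesis by linarith
qed

text \<open>Neighbourhood form of lower semicontinuity; unlike the Liminf form it is obviously stable
  under adding a continuous real function.\<close>

definition lsc_nbhd :: "('a::topological_space \<Rightarrow> ereal) \<Rightarrow> bool" where
  "lsc_nbhd g \<longleftrightarrow> (\<forall>x c. ereal c < g x \<longrightarrow> eventually (\<lambda>z. ereal c < g z) (at x))"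

lemma lsc_imp_lsc_nbhd: "lsc r \<Longrightarrow> lsc_nbhd r"
  unfolding lsc_def lsc_nbhd_def by (metis le_Liminf_iff order_less_le_trans)

lemma lsc_nbhd_add_continuous:
  assumes r: "lsc_nbhd r" and nm: "\<And>x. r x \<noteq> -\<infinity>" and q: "continuous_on UNIV q"
  shows "lsc_nbhd (\<lambda>y. r y + ereal (q y))"
  unfolding lsc_nbhd_def
proof (intro allI impI)
  fix x c assume c: "ereal c < r x + ereal (q x)"
  then have "ereal (c - q x) < r x" using nm[of x] by (cases "r x") auto
  then obtain d where d: "c - q x < d" "ereal d < r x" using ereal_dense2 by force
  have "eventually (\<lambda>z. ereal d < r z) (at x)" using r d(2) unfolding lsc_nbhd_def by auto
  moreover have "(q \<longlongrightarrow> q x) (at x)"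
    using q by (metis continuous_on_def UNIV_I at_within_open open_UNIV)
  then have "eventually (\<lambda>z. c - d < q z) (at x)"
    by (rule order_tendstoD(1)) (use d(1) in simp)
  ultimately show "eventually (\<lambda>z. ereal c < r z + ereal (q z)) (at x)"
  proof eventually_elim
    case (elim z)
    then show ?case using nm[of z] by (cases "r z") auto
  qed
qed

lemma lsc_nbhd_attains_min:
  fixes g :: "'a::topological_space \<Rightarrow> ereal"
  assumes g: "lsc_nbhd g" and K: "compact K" "K \<noteq> {}"
  shows "\<exists>z\<in>K. \<forall>w\<in>K. g z \<le> g w"
proof (rule ccontr)
  assume "\<not> ?thesis"
  then have "\<forall>z\<in>K. \<exists>w\<in>K. g w < g z" by (auto simp: not_le)
  have "\<forall>z\<in>K. \<exists>U w. open U \<and> z \<in> U \<and> w \<in> K \<and> (\<forall>y\<in>U. g w < g y)"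
  proof
    fix z assume "z \<in> K"
    obtain w where w: "w \<in> K" "g w < g z" using \<open>\<forall>z\<in>K. \<exists>w\<in>K. g w < g z\<close> \<open>z \<in> K\<close> by blast
    then obtain c where c: "g w < ereal c" "ereal c < g z" using ereal_dense2 by blast
    then have "eventually (\<lambda>y. ereal c < g y) (at z)" using g unfolding lsc_nbhd_def by auto
    then obtain S where "open S" "z \<in> S" "\<And>y. y \<in> S \<Longrightarrow> y \<noteq> z \<Longrightarrow> ereal c < g y"
      unfolding eventually_at_topological by auto
    then have "\<forall>y\<in>S. g w < g y" using c by (metis less_trans)
    with \<open>open S\<close> \<open>z \<in> S\<close> w
    show "\<exists>U w. open U \<and> z \<in> U \<and> w \<in> K \<and> (\<forall>y\<in>U. g w < g y)"
      by blast
  qed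
  then obtain U W where UW: "\<And>z. z \<in> K \<Longrightarrow>
      open (U z) \<and> z \<in> U z \<and> W z \<in> K \<and> (\<forall>y\<in>U z. g (W z) < g y)"
    by metis
  have "K \<subseteq> \<Union> (U ` K)" using UW by blast
  then obtain F where F: "F \<subseteq> K" "finite F" "K \<subseteq> \<Union> (U ` F)"
    using compactE_image[OF K(1)] UW by metis
  then have "F \<noteq> {}" using K(2) by auto
  then have "Min (g ` W ` F) \<in> g ` W ` F" using F(2) by (intro Min_in) auto
  then obtain z where "z \<in> F" "g (W z) = Min (g ` W ` F)" by auto
  then have z: "z \<in> F" "\<And>z'. z' \<in> F \<Longrightarrow> g (W z) \<le> g (W z')"
    using F(2) by auto
  then obtain z' where "z' \<in> F" "W z \<in> U z'" using F UW by blast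
  then have "g (W z') < g (W z)" using UW F(1) by auto
  with z(2)[OF \<open>z' \<in> F\<close>] show False by simp
qed

text \<open>A proper lsc convex function is bounded below on the unit ball around a point of its domain,
  and convexity propagates this bound outwards as an affine minorant in the distance.\<close>

lemma convex_lsc_proper_minorant:
  fixes r :: "'a::{real_normed_vector, heine_borel} \<Rightarrow> ereal"
  assumes conv: "ext_convex r" and ls: "lsc r" and nm: "\<And>x. r x \<noteq> -\<infinity>" and r0: "r y0 = ereal r0"
  shows "\<exists>A\<ge>0. \<forall>y. ereal (r0 - A * (1 + norm (y - y0))) \<le> r y"
proof -
  obtain z1 where z1: "z1 \<in> cball y0 1" "\<And>w. w \<in> cball y0 1 \<Longrightarrow> r z1 \<le> r w"
    using lsc_nbhd_attains_min[OF lsc_imp_lsc_nbhd[OF ls], of "cball y0 1"] by auto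
  have "r z1 \<le> r y0" using z1 by auto
  then obtain m where m: "r z1 = ereal m" using nm[of z1] r0 by (cases "r z1") auto
  have ball: "ereal m \<le> r w" if "norm (w - y0) \<le> 1" for w
    using z1(2)[of w] m that by (simp add: dist_norm norm_minus_commute)
  have mr0: "m \<le> r0" using ball[of y0] r0 by simp
  define A where "A = r0 - m"
  have "ereal (r0 - A * (1 + norm (y - y0))) \<le> r y" for y
  proof (cases "norm (y - y0) \<le> 1")
    case True
    have "r0 - A * (1 + norm (y - y0)) \<le> m" unfolding A_def
      using mult_right_mono[OF mr0, of "norm (y - y0)"] by (simp add: algebra_simps)
    then show ?thesis using ball[OF True] by (meson ereal_less_eq(3) order_trans)
  next
    case far: False
    show ?thesis
    proof (cases "r y")
      case (real b)
      define \<rho> where "\<rho> = norm (y - y0)"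
      have \<rho>1: "1 < \<rho>" using far unfolding \<rho>_def by simp
      define t where "t = 1 / \<rho>"
      have t: "0 < t" "t \<le> 1" using \<rho>1 unfolding t_def by auto
      define z where "z = (1 - t) *\<^sub>R y0 + t *\<^sub>R y"
      have "z - y0 = t *\<^sub>R (y - y0)" unfolding z_def by (simp add: algebra_simps)
      then have "norm (z - y0) = 1" using t \<rho>1 unfolding \<rho>_def t_def by simp
      then have "ereal m \<le> r z" by (simp add: ball)
      also have "r z \<le> ereal (1 - t) * r y0 + ereal t * r y"
        using conv t unfolding ext_convex_def z_def by auto
      finally have "m \<le> (1 - t) * r0 + t * b" using r0 real by simp
      then have "m * \<rho> \<le> ((1 - t) * r0 + t * b) * \<rho>" using \<rho>1 by (intro mult_right_mono) auto
      also have "\<dots> = r0 * \<rho> - r0 + b" using \<rho>1 unfolding t_def by (simp add: field_simps)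
      finally have "r0 - A * (1 + \<rho>) \<le> b" using mr0 unfolding A_def by (simp add: algebra_simps)
      then show ?thesis using real unfolding \<rho>_def by simp
    qed (use nm in auto)
  qed
  moreover have "0 \<le> A" using mr0 unfolding A_def by simp
  ultimately show ?thesis by blast
qed

lemma prox_objective_large_off_ball:
  fixes L :: "real^'n^'n"
  assumes minor: "\<And>y. ereal (r0 - A * (1 + norm (y - y0))) \<le> r y" and A: "0 \<le> A"
    and r0: "r y0 = ereal r0"
    and low: "\<And>v. lamm * (v \<bullet> v) \<le> v \<bullet> (L *v v)" and lm: "0 < lamm"
  shows "\<exists>R. \<forall>y. R < norm (u - y) \<longrightarrow>
           r y0 + ereal (prox_quad L u y0) \<le> r y + ereal (prox_quad L u y)"
proof -
  define d where "d = norm (u - y0)"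
  define B where "B = A * (1 + d) + prox_quad L u y0 + 1"
  have "0 \<le> prox_quad L u y0"
    unfolding prox_quad_def using quadratic_form_nonneg[OF low lm] by simp
  then have B1: "1 \<le> B" unfolding B_def d_def using A by simp
  have "r y0 + ereal (prox_quad L u y0) \<le> r y + ereal (prox_quad L u y)"
    if y: "max 1 (max d ((2 / lamm) * (A + B))) < norm (u - y)" for y
  proof -
    define \<sigma> where "\<sigma> = norm (u - y)"
    have \<sigma>1: "1 \<le> \<sigma>" using y unfolding \<sigma>_def by simp
    have "A + B \<le> lamm / 2 * \<sigma>" using y lm unfolding \<sigma>_def by (simp add: field_simps)
    then have "B * \<sigma> \<le> (lamm / 2 * \<sigma> - A) * \<sigma>" using \<sigma>1 by (intro mult_right_mono) auto
    moreover have "B \<le> B * \<sigma>" using \<sigma>1 B1 by simp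
    ultimately have "B \<le> lamm / 2 * \<sigma>\<^sup>2 - A * \<sigma>" by (simp add: power2_eq_square algebra_simps)
    moreover have "norm (y - y0) \<le> \<sigma> + d" unfolding \<sigma>_def d_def
      using norm_triangle_ineq[of "y - u" "u - y0"] by (simp add: norm_minus_commute)
    then have "A * norm (y - y0) \<le> A * (\<sigma> + d)" using A by (rule mult_left_mono)
    moreover have "lamm / 2 * \<sigma>\<^sup>2 \<le> prox_quad L u y"
      using low[of "u - y"] unfolding prox_quad_def \<sigma>_def by (simp add: power2_norm_eq_inner)
    ultimately have "r0 + prox_quad L u y0 \<le> (r0 - A * (1 + norm (y - y0))) + prox_quad L u y"
      unfolding B_def by (simp add: algebra_simps)
    then have "ereal (r0 + prox_quad L u y0) \<le> ereal (r0 - A * (1 + norm (y - y0))) + ereal (prox_quad L u y)"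
      by simp
    also have "\<dots> \<le> r y + ereal (prox_quad L u y)" using minor[of y] by (rule add_right_mono)
    finally show ?thesis using r0 by simp
  qed
  then show ?thesis by blast
qed

lemma is_prox_point_exists:
  fixes L :: "real^'n^'n"
  assumes conv: "ext_convex r" and prp: "proper_fun r" and ls: "lsc r"
    and low: "\<And>v. lamm * (v \<bullet> v) \<le> v \<bullet> (L *v v)" and lm: "0 < lamm"
  shows "\<exists>p. is_prox_point L r u p"
proof -
  have nm: "\<And>x. r x \<noteq> -\<infinity>" using prp unfolding proper_fun_def by auto
  obtain y0 where "r y0 \<noteq> \<infinity>" using prp unfolding proper_fun_def by auto
  then obtain r0 where r0: "r y0 = ereal r0" using nm[of y0] by (cases "r y0") auto
  obtain A where A: "0 \<le> A" and minor: "\<And>y. ereal (r0 - A * (1 + norm (y - y0))) \<le> r y"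
    using convex_lsc_proper_minorant[OF conv ls nm r0] by blast
  obtain R where R: "\<And>y. R < norm (u - y) \<Longrightarrow>
      r y0 + ereal (prox_quad L u y0) \<le> r y + ereal (prox_quad L u y)"
    using prox_objective_large_off_ball[OF minor A r0 low lm] by blast
  define K where "K = cball u (max R (norm (u - y0)))"
  have "y0 \<in> K" unfolding K_def by (simp add: dist_norm)
  have "lsc_nbhd (\<lambda>y. r y + ereal (prox_quad L u y))"
    using lsc_imp_lsc_nbhd[OF ls] nm continuous_on_prox_quad by (rule lsc_nbhd_add_continuous)
  then obtain p where "p \<in> K"
    and p: "\<And>w. w \<in> K \<Longrightarrow> r p + ereal (prox_quad L u p) \<le> r w + ereal (prox_quad L u w)"
    using lsc_nbhd_attains_min[of _ K] \<open>y0 \<in> K\<close> unfolding K_def by fastforce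
  have "r p + ereal (prox_quad L u p) \<le> r z + ereal (prox_quad L u z)" for z
  proof (cases "z \<in> K")
    case False
    then have "R < norm (u - z)" unfolding K_def by (simp add: dist_norm)
    then show ?thesis using p[OF \<open>y0 \<in> K\<close>] R order_trans by blast
  qed (rule p)
  then show ?thesis unfolding is_prox_point_def by blast
qed

lemma prox_is_prox_point:
  fixes L :: "real^'n^'n"
  assumes conv: "ext_convex r" and prp: "proper_fun r" and ls: "lsc r" and sym: "sym_mat L"
    and low: "\<And>v. lamm * (v \<bullet> v) \<le> v \<bullet> (L *v v)" and lm: "0 < lamm"
  shows "is_prox_point L r u (prox L r u)"
proof -
  obtain p where p: "is_prox_point L r u p" using is_prox_point_exists[OF conv prp ls low lm] by blast
  have "y = p" if "is_prox_point L r u y" for y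
  proof -
    have "(y - p) \<bullet> (L *v (y - p)) \<le> 0"
      using is_prox_point_firmly_nonexpansive[OF conv prp sym that p] by simp
    then have "lamm * ((y - p) \<bullet> (y - p)) \<le> 0" using low[of "y - p"] by simp
    then have "(y - p) \<bullet> (y - p) \<le> 0" using lm by (simp add: mult_le_0_iff)
    then show ?thesis by (metis inner_ge_zero antisym inner_eq_zero_iff right_minus_eq)
  qed
  then have "prox L r u = p" unfolding prox_eq_The_is_prox_point using p by (rule the_equality[rotated])
  then show ?thesis using p by simp
qed

lemma prox_firmly_nonexpansive:
  fixes L :: "real^'n^'n"
  assumes "ext_convex r" "proper_fun r" "lsc r" "sym_mat L"
    and "\<And>v. lamm * (v \<bullet> v) \<le> v \<bullet> (L *v v)" "0 < lamm"
  shows "(prox L r a - prox L r b) \<bullet> (L *v (prox L r a - prox L r b))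
          \<le> (prox L r a - prox L r b) \<bullet> (L *v (a - b))"
  using assms(1,2,4) prox_is_prox_point[OF assms] prox_is_prox_point[OF assms]
  by (rule is_prox_point_firmly_nonexpansive)

section \<open>Jacobians of firmly nonexpansive maps\<close>

lemma has_derivative_difference_quotient:
  fixes f :: "'a::real_normed_vector \<Rightarrow> 'b::real_normed_vector"
  assumes f: "(f has_derivative f') (at x)"
  shows "((\<lambda>t. (f (x + t *\<^sub>R h) - f x) /\<^sub>R t) \<longlongrightarrow> f' h) (at 0)"
proof -
  have "((\<lambda>t. x + t *\<^sub>R h) has_derivative (\<lambda>t. t *\<^sub>R h)) (at 0)"
    by (auto intro!: derivative_eq_intros)
  moreover have "(f has_derivative f') (at (x + 0 *\<^sub>R h))" using f by simp
  ultimately have "((\<lambda>t. f (x + t *\<^sub>R h)) has_derivative (\<lambda>t. t *\<^sub>R f' h)) (at 0)"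
    using has_derivative_linear[OF f]
    by (auto intro: has_derivative_eq_rhs[OF has_derivative_compose] simp: linear_scale)
  then have "((\<lambda>t. ((f (x + t *\<^sub>R h) - f x) - t *\<^sub>R f' h) /\<^sub>R norm t) \<longlongrightarrow> 0) (at 0)"
    by (simp add: has_derivative_at_within)
  then have "((\<lambda>t. norm (((f (x + t *\<^sub>R h) - f x) - t *\<^sub>R f' h) /\<^sub>R norm t)) \<longlongrightarrow> 0) (at 0)"
    by (rule tendsto_norm_zero)
  then have "((\<lambda>t. norm ((f (x + t *\<^sub>R h) - f x) /\<^sub>R t - f' h)) \<longlongrightarrow> 0) (at 0)"
  proof (rule Lim_transform_eventually)
    have "norm (((f (x + t *\<^sub>R h) - f x) - t *\<^sub>R f' h) /\<^sub>R norm t)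
       = norm ((f (x + t *\<^sub>R h) - f x) /\<^sub>R t - f' h)" if "t \<noteq> 0" for t
    proof -
      have "(f (x + t *\<^sub>R h) - f x) /\<^sub>R t - f' h = ((f (x + t *\<^sub>R h) - f x) - t *\<^sub>R f' h) /\<^sub>R t"
        using that by (simp add: algebra_simps)
      then show ?thesis by simp
    qed
    then show "\<forall>\<^sub>F t in at 0. norm (((f (x + t *\<^sub>R h) - f x) - t *\<^sub>R f' h) /\<^sub>R norm t)
       = norm ((f (x + t *\<^sub>R h) - f x) /\<^sub>R t - f' h)"
      by (simp add: eventually_at_filter)
  qed
  then show ?thesis by (simp add: tendsto_norm_zero_iff LIM_zero_iff)
qed

text \<open>The Jacobian form of firm nonexpansiveness in the norm induced by L.\<close>

definition firm_mats :: "real^'n^'n \<Rightarrow> (real^'n^'n) set" where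
  "firm_mats L = {D. \<forall>h. (D *v h) \<bullet> (L *v (D *v h)) \<le> (D *v h) \<bullet> (L *v h)}"

lemma jacobian_in_firm_mats:
  fixes F :: "real^'n \<Rightarrow> real^'n" and L :: "real^'n^'n"
  assumes fne: "\<And>a b. (F a - F b) \<bullet> (L *v (F a - F b)) \<le> (F a - F b) \<bullet> (L *v (a - b))"
    and "F differentiable (at y)"
  shows "jacobian F (at y) \<in> firm_mats L"
  unfolding firm_mats_def
proof (intro CollectI allI)
  fix h
  define J where "J = jacobian F (at y)"
  define Q where "Q = (\<lambda>t::real. (F (y + t *\<^sub>R h) - F y) /\<^sub>R t)"
  define \<phi> where "\<phi> = (\<lambda>w. w \<bullet> (L *v w) - w \<bullet> (L *v h))"
  have "(F has_derivative (\<lambda>v. J *v v)) (at y)"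
    using \<open>F differentiable (at y)\<close> jacobian_works unfolding J_def by blast
  then have "(Q \<longlongrightarrow> J *v h) (at 0)"
    unfolding Q_def by (rule has_derivative_difference_quotient)
  then have "((\<lambda>t. \<phi> (Q t)) \<longlongrightarrow> \<phi> (J *v h)) (at 0)"
    unfolding \<phi>_def by (intro tendsto_intros bounded_linear.tendsto[OF matrix_vector_mul_bounded_linear])
  moreover have "\<phi> (Q t) \<le> 0" if "t \<noteq> 0" for t
  proof -
    define \<Delta> where "\<Delta> = F (y + t *\<^sub>R h) - F y"
    have "\<Delta> \<bullet> (L *v \<Delta>) \<le> t * (\<Delta> \<bullet> (L *v h))"
      using fne[of "y + t *\<^sub>R h" y] unfolding \<Delta>_def by (simp add: matrix_vector_mult_scaleR)
    then have "(1/t)\<^sup>2 * (\<Delta> \<bullet> (L *v \<Delta>)) \<le> (1/t)\<^sup>2 * (t * (\<Delta> \<bullet> (L *v h)))"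
      by (intro mult_left_mono) auto
    moreover have "Q t \<bullet> (L *v Q t) = (1/t)\<^sup>2 * (\<Delta> \<bullet> (L *v \<Delta>))"
      unfolding Q_def \<Delta>_def[symmetric] using that
      by (simp add: matrix_vector_mult_scaleR power2_eq_square field_simps)
    moreover have "Q t \<bullet> (L *v h) = (1/t)\<^sup>2 * (t * (\<Delta> \<bullet> (L *v h)))"
      unfolding Q_def \<Delta>_def[symmetric] using that by (simp add: power2_eq_square field_simps)
    ultimately show ?thesis unfolding \<phi>_def by simp
  qed
  then have "\<forall>\<^sub>F t in at 0. \<phi> (Q t) \<le> 0" by (simp add: eventually_at_filter)
  ultimately have "\<phi> (J *v h) \<le> 0" by (rule tendsto_upperbound) simp
  then show "(J *v h) \<bullet> (L *v (J *v h)) \<le> (J *v h) \<bullet> (L *v h)" unfolding \<phi>_def by simp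
qed

lemma jacobian_prox_in_firm_mats:
  fixes L :: "real^'n^'n"
  assumes "ext_convex r" "proper_fun r" "lsc r" "sym_mat L"
    and "\<And>v. lamm * (v \<bullet> v) \<le> v \<bullet> (L *v v)" "0 < lamm"
    and "prox L r differentiable (at y)"
  shows "jacobian (prox L r) (at y) \<in> firm_mats L"
  using prox_firmly_nonexpansive[OF assms(1-6)] assms(7) by (rule jacobian_in_firm_mats)

lemma firm_mats_norm_bound:
  fixes L D :: "real^'n^'n"
  assumes D: "D \<in> firm_mats L" and low: "\<And>v. lamm * (v \<bullet> v) \<le> v \<bullet> (L *v v)" and lm: "0 < lamm"
  shows "lamm * norm (D *v h) \<le> norm (L *v h)"
proof -
  define y where "y = D *v h"
  have "lamm * (norm y)\<^sup>2 \<le> y \<bullet> (L *v y)" using low[of y] by (simp add: power2_norm_eq_inner)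
  also have "\<dots> \<le> y \<bullet> (L *v h)" using D unfolding firm_mats_def y_def by auto
  also have "\<dots> \<le> norm y * norm (L *v h)" by (rule norm_cauchy_schwarz)
  finally have "norm y * (lamm * norm y) \<le> norm y * norm (L *v h)"
    by (simp add: power2_eq_square algebra_simps)
  then show ?thesis unfolding y_def[symmetric]
    by (cases "norm y = 0") (use lm in auto)
qed

lemma firm_mats_inv_bound:
  fixes L D :: "real^'n^'n"
  assumes D: "D \<in> firm_mats L" and low: "\<And>v. lamm * (v \<bullet> v) \<le> v \<bullet> (L *v v)" and lm: "0 < lamm"
  shows "lamm * norm (D *v (matrix_inv L *v w)) \<le> norm w"
  using firm_mats_norm_bound[OF D low lm, of "matrix_inv L *v w"]
  by (simp add: matrix_vector_mul_assoc invertible_matrix_inv[OF coercive_imp_invertible[OF low lm]])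

lemma closed_firm_mats: "closed (firm_mats L)"
proof -
  have "firm_mats L = (\<Inter>h. {D. (D *v h) \<bullet> (L *v (D *v h)) - (D *v h) \<bullet> (L *v h) \<le> 0})"
    unfolding firm_mats_def by auto
  moreover have "closed {D. (D *v h) \<bullet> (L *v (D *v h)) - (D *v h) \<bullet> (L *v h) \<le> (0::real)}" for h
    by (intro closed_Collect_le continuous_intros continuous_on_matrix_vector_mult_left
        continuous_on_compose2[OF matrix_vector_mult_linear_continuous_on
          continuous_on_matrix_vector_mult_left]) auto
  ultimately show ?thesis by (auto intro: closed_INT)
qed

lemma convex_firm_mats:
  fixes L :: "real^'n^'n"
  assumes sym: "sym_mat L" and psd: "\<And>v. 0 \<le> v \<bullet> (L *v v)"
  shows "convex (firm_mats L)"
  unfolding convex_def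
proof (intro ballI allI impI)
  fix D1 D2 and a b :: real
  assume D1: "D1 \<in> firm_mats L" and D2: "D2 \<in> firm_mats L" and ab: "0 \<le> a" "0 \<le> b" "a + b = 1"
  show "a *\<^sub>R D1 + b *\<^sub>R D2 \<in> firm_mats L" unfolding firm_mats_def
  proof (intro CollectI allI)
    fix h
    define y1 where "y1 = D1 *v h"
    define y2 where "y2 = D2 *v h"
    have "y1 \<bullet> (L *v y1) \<le> y1 \<bullet> (L *v h)" using D1 unfolding firm_mats_def y1_def by auto
    then have "a * (y1 \<bullet> (L *v y1)) \<le> a * (y1 \<bullet> (L *v h))" using ab by (intro mult_left_mono) auto
    moreover have "y2 \<bullet> (L *v y2) \<le> y2 \<bullet> (L *v h)" using D2 unfolding firm_mats_def y2_def by auto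
    then have "b * (y2 \<bullet> (L *v y2)) \<le> b * (y2 \<bullet> (L *v h))" using ab by (intro mult_left_mono) auto
    moreover have "0 \<le> a * b * ((y1 - y2) \<bullet> (L *v (y1 - y2)))" using ab psd by simp
    ultimately have "(a *\<^sub>R y1 + b *\<^sub>R y2) \<bullet> (L *v (a *\<^sub>R y1 + b *\<^sub>R y2))
        \<le> (a *\<^sub>R y1 + b *\<^sub>R y2) \<bullet> (L *v h)"
      unfolding quadratic_form_convex_combination[OF sym ab(3)] by (simp add: inner_add_left)
    moreover have "(a *\<^sub>R D1 + b *\<^sub>R D2) *v h = a *\<^sub>R y1 + b *\<^sub>R y2"
      unfolding y1_def y2_def by (simp add: matrix_vector_mult_add_rdistrib scaleR_matrix_vector_assoc)
    ultimately show "((a *\<^sub>R D1 + b *\<^sub>R D2) *v h) \<bullet> (L *v ((a *\<^sub>R D1 + b *\<^sub>R D2) *v h))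
        \<le> ((a *\<^sub>R D1 + b *\<^sub>R D2) *v h) \<bullet> (L *v h)" by simp
  qed
qed

lemma bounded_firm_mats:
  fixes L :: "real^'n^'n"
  assumes low: "\<And>v. lamm * (v \<bullet> v) \<le> v \<bullet> (L *v v)" and lm: "0 < lamm"
  shows "bounded (firm_mats L)"
proof -
  define K where "K = mnorm L / lamm"
  have entry: "\<bar>D $ i $ j\<bar> \<le> K" if D: "D \<in> firm_mats L" for D i j
  proof -
    have "\<bar>D $ i $ j\<bar> \<le> norm (D *v axis j 1)"
      using component_le_norm_cart[of "D *v axis j 1" i]
      by (simp add: matrix_vector_mult_basis column_def)
    also have "\<dots> \<le> norm (L *v axis j 1) / lamm"
      using firm_mats_norm_bound[OF D low lm] lm by (simp add: field_simps)
    also have "\<dots> \<le> K" unfolding K_def using lm norm_matrix_vector_mult_le_mnorm[of L "axis j 1"]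
      by (simp add: divide_right_mono)
    finally show ?thesis .
  qed
  have "norm D \<le> real CARD('n) * (real CARD('n) * K)" if D: "D \<in> firm_mats L" for D
  proof -
    have "norm D \<le> (\<Sum>i\<in>UNIV. norm (D $ i))" by (simp add: norm_vec_def L2_set_le_sum)
    also have "\<dots> \<le> (\<Sum>i\<in>(UNIV::'n set). \<Sum>j\<in>(UNIV::'n set). K)"
      using entry[OF D] by (intro sum_mono order_trans[OF norm_le_l1_cart]) auto
    finally show ?thesis by simp
  qed
  then show ?thesis unfolding bounded_iff by blast
qed

section \<open>Upper semicontinuity of the Clarke Jacobian\<close>

lemma bouligand_jac_subset:
  fixes F :: "real^'n \<Rightarrow> real^'n"
  assumes S: "closed S" and jS: "\<And>y. F differentiable (at y) \<Longrightarrow> jacobian F (at y) \<in> S"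
  shows "bouligand_jac F u \<subseteq> S"
proof
  fix B assume "B \<in> bouligand_jac F u"
  then obtain xs where xs: "\<forall>k. F differentiable (at (xs k))" "(\<lambda>k. jacobian F (at (xs k))) \<longlonglongrightarrow> B"
    unfolding bouligand_jac_def by auto
  show "B \<in> S" using xs by (intro closed_sequentially[OF S _ xs(2)] jS) blast
qed

lemma clarke_jac_subset:
  fixes F :: "real^'n \<Rightarrow> real^'n"
  assumes "closed S" "convex S" and "\<And>y. F differentiable (at y) \<Longrightarrow> jacobian F (at y) \<in> S"
  shows "clarke_jac F u \<subseteq> S"
  unfolding clarke_jac_def using assms by (intro hull_minimal bouligand_jac_subset)

text \<open>If not, points converging to u0 with Jacobians staying e away from the Bouligand set
  would have, by boundedness, a convergent subsequence of Jacobians, whose limit lies in that set by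
  definition.\<close>

lemma jacobian_near_bouligand_jac:
  fixes F :: "real^'n \<Rightarrow> real^'n"
  assumes S: "closed S" "bounded S" and jS: "\<And>y. F differentiable (at y) \<Longrightarrow> jacobian F (at y) \<in> S"
    and e: "0 < e"
  shows "\<exists>\<delta>>0. \<forall>y. F differentiable (at y) \<and> dist y u0 < \<delta> \<longrightarrow>
            (\<exists>B\<in>bouligand_jac F u0. norm (jacobian F (at y) - B) < e)"
proof (rule ccontr)
  assume neg: "\<not> ?thesis"
  have "\<forall>k::nat. \<exists>y. dist y u0 < 1 / Suc k \<and> F differentiable (at y) \<and>
          (\<forall>B\<in>bouligand_jac F u0. e \<le> norm (jacobian F (at y) - B))"
  proof
    fix k :: nat
    have "(0::real) < 1 / Suc k" by simp
    then have "\<not> (\<forall>y. F differentiable (at y) \<and> dist y u0 < 1 / Suc k \<longrightarrow>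
            (\<exists>B\<in>bouligand_jac F u0. norm (jacobian F (at y) - B) < e))"
      using neg by blast
    then show "\<exists>y. dist y u0 < 1 / Suc k \<and> F differentiable (at y) \<and>
          (\<forall>B\<in>bouligand_jac F u0. e \<le> norm (jacobian F (at y) - B))"
      by (auto simp: not_less)
  qed
  then obtain ys where "\<forall>k. dist (ys k) u0 < 1 / Suc k \<and> F differentiable (at (ys k)) \<and>
          (\<forall>B\<in>bouligand_jac F u0. e \<le> norm (jacobian F (at (ys k)) - B))"
    by (rule choice[THEN exE])
  then have ys: "\<And>k. dist (ys k) u0 < 1 / Suc k" "\<And>k. F differentiable (at (ys k))"
      "\<And>k B. B \<in> bouligand_jac F u0 \<Longrightarrow> e \<le> norm (jacobian F (at (ys k)) - B)"
    by auto
  have "bounded (range (\<lambda>k. jacobian F (at (ys k))))"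
    using jS[OF ys(2)] by (intro bounded_subset[OF S(2)]) auto
  then obtain B \<phi> where \<phi>: "strict_mono \<phi>" "((\<lambda>k. jacobian F (at (ys k))) \<circ> \<phi>) \<longlonglongrightarrow> B"
    using bounded_imp_convergent_subsequence by blast
  have "(\<lambda>k. dist (ys k) u0) \<longlonglongrightarrow> 0"
  proof (rule tendsto_sandwich[OF _ _ tendsto_const])
    show "(\<lambda>k. 1 / real (Suc k)) \<longlonglongrightarrow> 0" by (rule LIMSEQ_Suc[OF lim_const_over_n])
    show "\<forall>\<^sub>F k in sequentially. dist (ys k) u0 \<le> 1 / real (Suc k)"
      using ys(1) by (intro always_eventually allI less_imp_le)
  qed simp
  then have "(ys \<circ> \<phi>) \<longlonglongrightarrow> u0"
    using \<phi>(1) tendsto_dist_iff LIMSEQ_subseq_LIMSEQ by blast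
  then have B: "B \<in> bouligand_jac F u0" unfolding bouligand_jac_def
    using \<phi>(2) ys(2) by (auto intro!: exI[of _ "ys \<circ> \<phi>"] simp: o_def)
  obtain k where "dist (jacobian F (at (ys (\<phi> k)))) B < e"
    using tendstoD[OF \<phi>(2) e] by (auto dest: eventually_happens)
  then show False using ys(3)[OF B, of "\<phi> k"] by (simp add: dist_norm)
qed

lemma closed_convex_thickening:
  fixes P :: "'a::real_normed_vector set"
  assumes "compact P" "convex P"
  shows "closed {D. \<exists>D'\<in>P. norm (D - D') \<le> e}" "convex {D. \<exists>D'\<in>P. norm (D - D') \<le> e}"
proof -
  have "D \<in> (\<Union>x\<in>cball 0 e. \<Union>y\<in>P. {x + y}) \<longleftrightarrow> (\<exists>D'\<in>P. norm (D - D') \<le> e)" for D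
  proof
    assume "\<exists>D'\<in>P. norm (D - D') \<le> e"
    then obtain D' where "D' \<in> P" "norm (D - D') \<le> e" by blast
    then show "D \<in> (\<Union>x\<in>cball 0 e. \<Union>y\<in>P. {x + y})"
      by (intro UN_I[of "D - D'"] UN_I[of D']) auto
  next
    assume "D \<in> (\<Union>x\<in>cball 0 e. \<Union>y\<in>P. {x + y})"
    then obtain x y where "x \<in> cball 0 e" "y \<in> P" "D = x + y" by blast
    then show "\<exists>D'\<in>P. norm (D - D') \<le> e" by (intro bexI[of _ y]) auto
  qed
  then have "{D. \<exists>D'\<in>P. norm (D - D') \<le> e} = (\<Union>x\<in>cball 0 e. \<Union>y\<in>P. {x + y})" by blast
  then show "closed {D. \<exists>D'\<in>P. norm (D - D') \<le> e}" "convex {D. \<exists>D'\<in>P. norm (D - D') \<le> e}"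
    using assms by (auto intro: closed_compact_sums convex_sums)
qed

lemma clarke_jac_upper_semicontinuous:
  fixes F :: "real^'n \<Rightarrow> real^'n"
  assumes S: "closed S" "bounded S" "convex S"
    and jS: "\<And>y. F differentiable (at y) \<Longrightarrow> jacobian F (at y) \<in> S" and e: "0 < e"
  shows "\<exists>\<delta>>0. \<forall>u. dist u u0 < \<delta> \<longrightarrow>
            clarke_jac F u \<subseteq> {D. \<exists>D'\<in>closure (clarke_jac F u0). norm (D - D') \<le> e}"
proof -
  obtain \<delta> where \<delta>: "0 < \<delta>" "\<And>y. F differentiable (at y) \<Longrightarrow> dist y u0 < \<delta> \<Longrightarrow>
            \<exists>B\<in>bouligand_jac F u0. norm (jacobian F (at y) - B) < e"
    using jacobian_near_bouligand_jac[OF S(1,2) jS e] by blast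
  define P where "P = closure (clarke_jac F u0)"
  have "bounded (clarke_jac F u0)" using clarke_jac_subset[OF S(1,3) jS] S(2) by (rule bounded_subset[rotated])
  then have P: "compact P" "convex P" unfolding P_def clarke_jac_def
    by (auto intro: convex_closure convex_convex_hull)
  have BP: "bouligand_jac F u0 \<subseteq> P" unfolding P_def clarke_jac_def
    by (rule order_trans[OF hull_subset closure_subset])
  define T where "T = {D. \<exists>D'\<in>P. norm (D - D') \<le> e}"
  note T = closed_convex_thickening[OF P, of e, folded T_def]
  have "clarke_jac F u \<subseteq> T" if u: "dist u u0 < \<delta>" for u
    unfolding clarke_jac_def
  proof (intro hull_minimal T(2) subsetI)
    fix B assume "B \<in> bouligand_jac F u"
    then obtain xs where xs: "xs \<longlonglongrightarrow> u" "\<And>k. F differentiable (at (xs k))"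
        "(\<lambda>k. jacobian F (at (xs k))) \<longlonglongrightarrow> B"
      unfolding bouligand_jac_def by auto
    have "eventually (\<lambda>k. dist (xs k) u < \<delta> - dist u u0) sequentially"
      using xs(1) u by (intro tendstoD) auto
    then have "eventually (\<lambda>k. jacobian F (at (xs k)) \<in> T) sequentially"
    proof eventually_elim
      case (elim k)
      then have "dist (xs k) u0 < \<delta>" using dist_triangle[of "xs k" u0 u] by simp
      then obtain B' where "B' \<in> bouligand_jac F u0" "norm (jacobian F (at (xs k)) - B') < e"
        using \<delta>(2)[OF xs(2)] by blast
      then show ?case using BP unfolding T_def by (intro CollectI bexI[of _ B']) auto
    qed
    then show "B \<in> T" using T(1) xs(3) by (intro Lim_in_closed_set[OF T(1)]) auto
  qed
  then show ?thesis using \<delta>(1) unfolding T_def P_def by blast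
qed

section \<open>Stability of the generalized Newton matrices\<close>

lemma newton_mat_apply:
  fixes D A B :: "real^'n^'n"
  shows "(mat 1 - D + D ** A ** B) *v v = v - D *v v + D *v (A *v (B *v v))"
  by (simp add: matrix_vector_mult_add_rdistrib matrix_vector_mult_diff_rdistrib
      matrix_vector_mul_assoc matrix_mul_assoc)

lemma newton_mat_diff_bound:
  fixes D D' Li H H0 :: "real^'n^'n"
  assumes DLi: "\<And>w. lamm * norm (D *v (Li *v w)) \<le> norm w" and lm: "0 < lamm"
  shows "norm (((mat 1 - D + D ** Li ** H) - (mat 1 - D' + D' ** Li ** H0)) *v v)
     \<le> (norm (D - D') * (1 + norm (Li ** H0)) + mnorm (H0 - H) / lamm) * norm v"
proof -
  have "((mat 1 - D + D ** Li ** H) - (mat 1 - D' + D' ** Li ** H0)) *v v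
     = (v - D *v v + D *v (Li *v (H *v v))) - (v - D' *v v + D' *v (Li *v (H0 *v v)))"
    unfolding matrix_vector_mult_diff_rdistrib newton_mat_apply ..
  also have "\<dots> = (D' - D) *v v + (D - D') *v ((Li ** H0) *v v) - D *v (Li *v ((H0 - H) *v v))"
    by (simp add: matrix_vector_mult_diff_rdistrib matrix_vector_mult_diff_distrib
        matrix_vector_mul_assoc[symmetric] algebra_simps)
  finally have "((mat 1 - D + D ** Li ** H) - (mat 1 - D' + D' ** Li ** H0)) *v v
      = (D' - D) *v v + (D - D') *v ((Li ** H0) *v v) - D *v (Li *v ((H0 - H) *v v))" .
  moreover have "norm ((D' - D) *v v) \<le> norm (D - D') * norm v"
    using norm_matrix_vector_mult_le[of "D' - D" v] by (simp add: norm_minus_commute)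
  moreover have "norm ((D - D') *v ((Li ** H0) *v v)) \<le> norm (D - D') * (norm (Li ** H0) * norm v)"
    by (meson norm_matrix_vector_mult_le mult_left_mono norm_ge_zero order_trans)
  moreover have "lamm * norm (D *v (Li *v ((H0 - H) *v v))) \<le> mnorm (H0 - H) * norm v"
    using DLi[of "(H0 - H) *v v"] norm_matrix_vector_mult_le_mnorm[of "H0 - H" v] by linarith
  then have "norm (D *v (Li *v ((H0 - H) *v v))) \<le> mnorm (H0 - H) / lamm * norm v"
    using lm by (simp add: field_simps)
  moreover have "norm (a + b - c) \<le> norm a + norm b + norm c" for a b c :: "real^'n"
    using norm_triangle_ineq4[of "a + b" c] norm_triangle_ineq[of a b] by linarith
  moreover have "(norm (D - D') * (1 + norm (Li ** H0)) + mnorm (H0 - H) / lamm) * norm v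
      = norm (D - D') * norm v + norm (D - D') * (norm (Li ** H0) * norm v) + mnorm (H0 - H) / lamm * norm v"
    by (simp add: algebra_simps)
  ultimately show ?thesis by (smt (verit))
qed

lemma closed_newton_lower_bound:
  fixes A B :: "real^'n^'n"
  shows "closed {D. \<forall>v. norm v \<le> C * norm ((mat 1 - D + D ** A ** B) *v v)}"
proof -
  have "{D. \<forall>v. norm v \<le> C * norm ((mat 1 - D + D ** A ** B) *v v)}
      = (\<Inter>v. {D. norm v - C * norm (v - D *v v + D *v (A *v (B *v v))) \<le> 0})"
    by (auto simp: newton_mat_apply)
  moreover have "closed {D::real^'n^'n. norm v - C * norm (v - D *v v + D *v (A *v (B *v v))) \<le> 0}" for v
    by (intro closed_Collect_le continuous_intros continuous_on_matrix_vector_mult_left)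
  ultimately show ?thesis by (auto intro: closed_INT)
qed

lemma clarke_newton_lower_bound_near:
  fixes F :: "real^'n \<Rightarrow> real^'n" and L H0 :: "real^'n^'n"
  assumes jS: "\<And>y. F differentiable (at y) \<Longrightarrow> jacobian F (at y) \<in> firm_mats L"
    and sym: "sym_mat L" and low: "\<And>v. lamm * (v \<bullet> v) \<le> v \<bullet> (L *v v)" and lm: "0 < lamm"
    and reg: "\<And>D v. D \<in> clarke_jac F u0 \<Longrightarrow>
      norm v \<le> C * norm ((mat 1 - D + D ** matrix_inv L ** H0) *v v)"
    and C: "0 < C" and \<eta>: "\<eta> < \<beta> / C"
  shows "\<exists>\<delta>>0. \<forall>u D H.
           dist u u0 < \<delta> \<and> D \<in> clarke_jac F u \<and> mnorm (H0 - H) \<le> lamm * \<eta> \<longrightarrow>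
           (\<forall>v. (1 - \<beta>) / C * norm v \<le> norm ((mat 1 - D + D ** matrix_inv L ** H) *v v))"
proof -
  define Li where "Li = matrix_inv L"
  define e where "e = (\<beta> / C - \<eta>) / (1 + norm (Li ** H0))"
  have "0 < e" unfolding e_def using \<eta> by (simp add: add_pos_nonneg)
  have S: "closed (firm_mats L)" "bounded (firm_mats L)" "convex (firm_mats L)"
    using closed_firm_mats bounded_firm_mats[OF low lm]
      convex_firm_mats[OF sym quadratic_form_nonneg[OF low lm]] by blast+
  obtain \<delta> where "0 < \<delta>" and \<delta>: "\<And>u. dist u u0 < \<delta> \<Longrightarrow>
      clarke_jac F u \<subseteq> {D. \<exists>D'\<in>closure (clarke_jac F u0). norm (D - D') \<le> e}"
    using clarke_jac_upper_semicontinuous[OF S jS \<open>0 < e\<close>] by blast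
  have reg_closure: "closure (clarke_jac F u0)
      \<subseteq> {D. \<forall>v. norm v \<le> C * norm ((mat 1 - D + D ** Li ** H0) *v v)}"
    using reg unfolding Li_def by (intro closure_minimal closed_newton_lower_bound) blast
  have "(1 - \<beta>) / C * norm v \<le> norm ((mat 1 - D + D ** Li ** H) *v v)"
    if u: "dist u u0 < \<delta>" and D: "D \<in> clarke_jac F u" and H: "mnorm (H0 - H) \<le> lamm * \<eta>" for u D H v
  proof -
    obtain D' where D': "D' \<in> closure (clarke_jac F u0)" "norm (D - D') \<le> e"
      using \<delta>[OF u] D by blast
    have "D \<in> firm_mats L" using D clarke_jac_subset[OF S(1,3) jS] by blast
    then have DLi: "lamm * norm (D *v (Li *v w)) \<le> norm w" for w
      unfolding Li_def by (rule firm_mats_inv_bound[OF _ low lm])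
    have "norm (((mat 1 - D + D ** Li ** H) - (mat 1 - D' + D' ** Li ** H0)) *v w) \<le> \<beta> / C * norm w" for w
    proof -
      have "norm (D - D') * (1 + norm (Li ** H0)) \<le> \<beta> / C - \<eta>"
        using D'(2) unfolding e_def by (simp add: pos_le_divide_eq add_pos_nonneg)
      moreover have "mnorm (H0 - H) / lamm \<le> \<eta>" using H lm by (simp add: pos_divide_le_eq mult.commute)
      ultimately show ?thesis using newton_mat_diff_bound[OF DLi lm, where D'=D' and H=H and H0=H0 and v=w]
        by (smt (verit) mult_right_mono norm_ge_zero)
    qed
    then show ?thesis
      using reg_closure D'(1) C by (intro lower_bound_perturbation) blast+
  qed
  then show ?thesis using \<open>0 < \<delta>\<close> unfolding Li_def by blast
qed

lemma clarke_lower_bound_if_Mset_regular: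
  assumes reg: "\<And>M. M \<in> Mset \<Lambda> r x g H \<Longrightarrow> invertible M \<and> mnorm (matrix_inv M) \<le> C"
    and D: "D \<in> clarke_jac (prox \<Lambda> r) (x - matrix_inv \<Lambda> *v g)"
  shows "norm v \<le> C * norm ((mat 1 - D + D ** matrix_inv \<Lambda> ** H) *v v)"
  using reg[of "mat 1 - D + D ** matrix_inv \<Lambda> ** H"] D lower_bound_if_mnorm_inv_le
  unfolding Mset_def by blast

lemma dist_forward_step_less:
  fixes Li :: "real^'n^'n"
  assumes lip: "L-lipschitz_on UNIV g" and x: "dist x xs < \<epsilon>" and G: "norm (g x - G) \<le> \<epsilon>"
  shows "dist (x - Li *v G) (xs - Li *v g xs) < \<epsilon> * (1 + norm Li * (1 + L))"
proof -
  have "norm (g x - g xs) \<le> L * \<epsilon>"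
    using lipschitz_onD[OF lip] x lipschitz_on_nonneg[OF lip]
    by (metis UNIV_I dist_norm less_imp_le mult_left_mono order_trans)
  then have "norm ((G - g x) + (g x - g xs)) \<le> \<epsilon> + L * \<epsilon>"
    using G norm_triangle_ineq[of "G - g x" "g x - g xs"] by (simp add: norm_minus_commute)
  then have w: "norm (Li *v ((G - g x) + (g x - g xs))) \<le> norm Li * (\<epsilon> + L * \<epsilon>)"
    by (meson norm_matrix_vector_mult_le mult_left_mono norm_ge_zero order_trans)
  have "dist (x - Li *v G) (xs - Li *v g xs) = norm ((x - xs) - Li *v ((G - g x) + (g x - g xs)))"
    unfolding dist_norm by (simp add: matrix_vector_mult_diff_distrib algebra_simps)
  also have "\<dots> \<le> norm (x - xs) + norm (Li *v ((G - g x) + (g x - g xs)))"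
    by (rule norm_triangle_ineq4)
  also have "\<dots> < \<epsilon> + norm Li * (\<epsilon> + L * \<epsilon>)"
    using x w by (simp add: dist_norm add_less_le_mono)
  finally show ?thesis by (simp add: algebra_simps)
qed

theorem lemma4p3:
  fixes f :: "real^'n \<Rightarrow> real" and gf :: "real^'n \<Rightarrow> real^'n"
    and Hf :: "real^'n \<Rightarrow> real^'n^'n"
    and r :: "real^'n \<Rightarrow> ereal"
    and G :: "'s \<Rightarrow> real^'n \<Rightarrow> real^'n" and H :: "'t \<Rightarrow> real^'n \<Rightarrow> real^'n^'n"
    and L lamM lamm C :: real and xs :: "real^'n" and \<Lambda> :: "real^'n^'n"
  assumes r_convex: "ext_convex r" and r_lsc: "lsc r" and r_proper: "proper_fun r"
    and grad: "\<And>x. (f has_derivative (\<lambda>h. gf x \<bullet> h)) (at x)"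
    and hess: "\<And>x. (gf has_derivative (\<lambda>h. Hf x *v h)) (at x)"
    and hess_cont: "continuous_on UNIV Hf"
    and lip: "L-lipschitz_on UNIV gf"
    and H_sym: "\<And>t x. sym_mat (H t x)"
    and Lam_pd: "pos_def \<Lambda>"
    and Lam_up: "loewner_le \<Lambda> (lamM *\<^sub>R mat 1)"
    and Lam_low: "loewner_le (lamm *\<^sub>R mat 1) \<Lambda>"
    and lm_pos: "lamm > 0"
    and C_pos: "C > 0"
    and reg: "\<And>M. M \<in> Mset \<Lambda> r xs (gf xs) (Hf xs) \<Longrightarrow>
                 invertible M \<and> mnorm (matrix_inv M) \<le> C"
  shows "\<forall>\<beta>c \<gamma>c. 0 < \<beta>c \<and> \<beta>c < 1 \<and> 0 < \<gamma>c \<and> \<gamma>c < \<beta>c / C \<longrightarrow>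
           (\<exists>\<epsilon>c > 0. \<forall>s t x. dist x xs < \<epsilon>c \<and> norm (gf x - G s x) \<le> \<epsilon>c \<and>
               mnorm (Hf x - H t x) \<le> 0.5 * lamm * \<gamma>c \<longrightarrow>
               (\<forall>M \<in> Mset \<Lambda> r x (G s x) (H t x).
                   invertible M \<and> mnorm (matrix_inv M) \<le> C / (1 - \<beta>c)))"
proof (intro allI impI)
  fix \<beta>c \<gamma>c :: real assume "0 < \<beta>c \<and> \<beta>c < 1 \<and> 0 < \<gamma>c \<and> \<gamma>c < \<beta>c / C"
  then have \<beta>: "0 < \<beta>c" "\<beta>c < 1" and \<gamma>: "\<gamma>c < \<beta>c / C" by auto
  define Li where "Li = matrix_inv \<Lambda>"
  define u0 where "u0 = xs - Li *v gf xs"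
  have sym: "sym_mat \<Lambda>" using Lam_pd by (simp add: pos_def_def)
  note low = loewner_le_scaleR_mat_1D[OF Lam_low]
  have reg': "\<And>D v. D \<in> clarke_jac (prox \<Lambda> r) u0 \<Longrightarrow>
      norm v \<le> C * norm ((mat 1 - D + D ** matrix_inv \<Lambda> ** Hf xs) *v v)"
    unfolding u0_def Li_def by (rule clarke_lower_bound_if_Mset_regular[OF reg])
  \<comment> \<open>The slack between gamma and beta/C is shared between the sampled Hessian error and the
    continuity of the Hessian at xs.\<close>
  have \<eta>: "(\<beta>c / C + \<gamma>c) / 2 < \<beta>c / C" using \<gamma> by (simp add: divide_simps)
  obtain \<delta> where "0 < \<delta>"
    and \<delta>: "\<And>u D H v. dist u u0 < \<delta> \<Longrightarrow> D \<in> clarke_jac (prox \<Lambda> r) u \<Longrightarrow>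
      mnorm (Hf xs - H) \<le> lamm * ((\<beta>c / C + \<gamma>c) / 2) \<Longrightarrow>
      (1 - \<beta>c) / C * norm v \<le> norm ((mat 1 - D + D ** Li ** H) *v v)"
    using clarke_newton_lower_bound_near[OF jacobian_prox_in_firm_mats[OF r_convex r_proper r_lsc sym low lm_pos]
        sym low lm_pos reg' C_pos \<eta>] unfolding Li_def by blast
  obtain \<rho> where "0 < \<rho>"
    and \<rho>: "\<And>x. dist x xs < \<rho> \<Longrightarrow> dist (Hf x) (Hf xs) < lamm * (\<beta>c / C) / 2"
    using hess_cont \<beta>(1) lm_pos C_pos unfolding continuous_on_iff
    by (metis UNIV_I divide_pos_pos half_gt_zero mult_pos_pos)
  define \<epsilon>c where "\<epsilon>c = min \<rho> (\<delta> / (1 + norm Li * (1 + L)))"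
  have k: "0 < 1 + norm Li * (1 + L)" using lipschitz_on_nonneg[OF lip] by (simp add: add_pos_nonneg)
  then have "0 < \<epsilon>c" unfolding \<epsilon>c_def using \<open>0 < \<rho>\<close> \<open>0 < \<delta>\<close> by simp
  moreover have "invertible M \<and> mnorm (matrix_inv M) \<le> C / (1 - \<beta>c)"
    if x: "dist x xs < \<epsilon>c" "norm (gf x - G s x) \<le> \<epsilon>c" "mnorm (Hf x - H t x) \<le> 0.5 * lamm * \<gamma>c"
      and M: "M \<in> Mset \<Lambda> r x (G s x) (H t x)" for s t x M
  proof -
    obtain D where MD: "M = mat 1 - D + D ** Li ** H t x"
      and D: "D \<in> clarke_jac (prox \<Lambda> r) (x - Li *v G s x)"
      using M unfolding Mset_def Li_def by blast
    have "dist (x - Li *v G s x) u0 < \<epsilon>c * (1 + norm Li * (1 + L))"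
      unfolding u0_def using x(1,2) by (rule dist_forward_step_less[OF lip])
    also have "\<dots> \<le> \<delta>" using k unfolding \<epsilon>c_def by (simp add: pos_le_divide_eq[symmetric])
    finally have u: "dist (x - Li *v G s x) u0 < \<delta>" .
    have "mnorm (Hf xs - H t x) \<le> mnorm (Hf xs - Hf x) + mnorm (Hf x - H t x)"
      using mnorm_triangle[of "Hf xs - Hf x" "Hf x - H t x"] by simp
    also have "\<dots> \<le> lamm * (\<beta>c / C) / 2 + lamm * \<gamma>c / 2"
      using mnorm_le_norm[of "Hf xs - Hf x"] \<rho>[of x] x(1,3) unfolding \<epsilon>c_def
      by (simp add: dist_norm norm_minus_commute)
    finally have "mnorm (Hf xs - H t x) \<le> lamm * ((\<beta>c / C + \<gamma>c) / 2)" by (simp add: algebra_simps)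
    then have "(1 - \<beta>c) / C * norm v \<le> norm (M *v v)" for v
      using \<delta>[OF u D] unfolding MD by blast
    then show ?thesis
      using invertible_if_lower_bound[of "(1 - \<beta>c) / C" M] \<beta>(2) C_pos by simp
  qed
  ultimately show "\<exists>\<epsilon>c>0. \<forall>s t x. dist x xs < \<epsilon>c \<and> norm (gf x - G s x) \<le> \<epsilon>c \<and>
      mnorm (Hf x - H t x) \<le> 0.5 * lamm * \<gamma>c \<longrightarrow>
      (\<forall>M\<in>Mset \<Lambda> r x (G s x) (H t x). invertible M \<and> mnorm (matrix_inv M) \<le> C / (1 - \<beta>c))"
    by blast
qed

end
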